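(* For every integer $e\ge2$, the function $\Omega_e=\mathrm{Sh}_{1-2e^{-1}}(\Omega)$ is convex.
   Context: $\Omega(s)=\frac2\pi(s\arcsin\frac s2+\sqrt{4-s^2})$ for $|s|\le2$ and $\Omega(s)=|s|$ otherwise; $\Omega$ is $C^1$, even, equal to $|s|$ for $|s|\ge2$ and strictly convex on $[-2,2]$. For such a function $f$ (with $a=2$) and $\alpha\in[0,1)$: $F_\alpha(s)=f(s)-\alpha s$, $x_\alpha^+=(f')^{-1}(\alpha)\in[0,a)$ (inverse of $f':[-a,a]\to[-1,1]$); let $F_\alpha^{-1}$ be the inverse of $F_\alpha|_{[x_\alpha^+,\infty)}$, $\phi=F_\alpha^{-1}\circ F_\alpha$, $\delta_x=(1-\alpha)^{-1}F_\alpha(x)-\phi(x)$, $s_\alpha=x_\alpha^++\delta_{x_\alpha^+}$; $x\mapsto x+\delta_x$ is an increasing bijection $(-\infty,x_\alpha^+]\to(-\infty,s_\alpha]$ with inverse $\tau$. Define $\mathrm{Sh}_\alpha(f)(x)=\alpha x+F_\alpha(\tau(x))$ for $x\le s_\alpha$ and $=x$ for $x>s_\alpha$. *)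

theory Defs
  imports "HOL-Analysis.Analysis"
begin

definition Omega :: "real \<Rightarrow> real" where
  "Omega s = (if \<bar>s\<bar> \<le> 2 then (2 / pi) * (s * arcsin (s / 2) + sqrt (4 - s\<^sup>2)) else \<bar>s\<bar>)"

text \<open>The shift construction Sh_alpha(f), for a C^1 even function f equal to |s| for |s| >= a
  and strictly convex on [-a,a].\<close>
definition F_al :: "(real \<Rightarrow> real) \<Rightarrow> real \<Rightarrow> real \<Rightarrow> real" where
  "F_al f \<alpha> s = f s - \<alpha> * s"

definition xplus :: "(real \<Rightarrow> real) \<Rightarrow> real \<Rightarrow> real \<Rightarrow> real" where
  "xplus f a \<alpha> = (THE x. x \<in> {-a..a} \<and> deriv f x = \<alpha>)"

definition F_inv :: "(real \<Rightarrow> real) \<Rightarrow> real \<Rightarrow> real \<Rightarrow> real \<Rightarrow> real" where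
  "F_inv f a \<alpha> y = (THE z. xplus f a \<alpha> \<le> z \<and> F_al f \<alpha> z = y)"

definition phi_al :: "(real \<Rightarrow> real) \<Rightarrow> real \<Rightarrow> real \<Rightarrow> real \<Rightarrow> real" where
  "phi_al f a \<alpha> x = F_inv f a \<alpha> (F_al f \<alpha> x)"

definition delta_al :: "(real \<Rightarrow> real) \<Rightarrow> real \<Rightarrow> real \<Rightarrow> real \<Rightarrow> real" where
  "delta_al f a \<alpha> x = F_al f \<alpha> x / (1 - \<alpha>) - phi_al f a \<alpha> x"

definition s_al :: "(real \<Rightarrow> real) \<Rightarrow> real \<Rightarrow> real \<Rightarrow> real" where
  "s_al f a \<alpha> = xplus f a \<alpha> + delta_al f a \<alpha> (xplus f a \<alpha>)"

definition tau_al :: "(real \<Rightarrow> real) \<Rightarrow> real \<Rightarrow> real \<Rightarrow> real \<Rightarrow> real" where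
  "tau_al f a \<alpha> x = (THE y. y \<le> xplus f a \<alpha> \<and> y + delta_al f a \<alpha> y = x)"

definition Sh :: "(real \<Rightarrow> real) \<Rightarrow> real \<Rightarrow> real \<Rightarrow> real \<Rightarrow> real" where
  "Sh f a \<alpha> x = (if x \<le> s_al f a \<alpha> then \<alpha> * x + F_al f \<alpha> (tau_al f a \<alpha> x) else x)"

end

theory Submission
  imports Defs
begin

text \<open>
  Put \<open>k = 1 - \<alpha>\<close> and \<open>F = F\<^sub>\<alpha>\<close>. Left of \<open>s\<^sub>\<alpha>\<close>, \<open>Sh\<^sub>\<alpha>(f)(X) - \<alpha>X = F(\<tau>(X))\<close> is the
  least \<open>c\<close> admitting \<open>y, z\<close> with \<open>F y \<le> c\<close>, \<open>F z \<le> c\<close> and \<open>c \<le> k (X - y + z)\<close>: the pair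
  \<open>y = \<tau>(X)\<close>, \<open>z = \<phi>(\<tau>(X))\<close> attains it, and a smaller \<open>c\<close> would force \<open>y > \<tau>(X)\<close> and
  \<open>z < \<phi>(\<tau>(X))\<close>, which the slope bound \<open>F' \<le> k\<close> forbids. Right of \<open>s\<^sub>\<alpha>\<close>,
  \<open>Sh\<^sub>\<alpha>(f)(X) - \<alpha>X = kX\<close>, which dominates that least value there and is dominated by
  \<open>Sh\<^sub>\<alpha>(f) - \<alpha> id\<close> everywhere. Hence \<open>Sh\<^sub>\<alpha>(f) - \<alpha> id\<close> is the maximum of a linear function
  and the lower boundary of a region that is convex because \<open>F\<close> is. For \<open>\<Omega>\<close> the required
  properties of \<open>F\<^sub>\<alpha>\<close> come from \<open>\<Omega>' = (2/\<pi>) arcsin(s/2)\<close>, clamped to \<open>[-1, 1]\<close>, being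
  nondecreasing and strictly increasing on \<open>[-2, 2]\<close>.
\<close>

lemma convex_on_max_lower_boundary:
  fixes h l :: "'a::real_vector \<Rightarrow> real" and E :: "('a \<times> real) set"
  assumes "convex E" and "convex_on UNIV l"
    and below: "\<And>x. l x \<le> h x"
    and attained: "\<And>x. \<exists>c. (x, c) \<in> E \<and> c \<le> h x"
    and bounded: "\<And>x c. (x, c) \<in> E \<Longrightarrow> h x \<le> max (l x) c"
  shows "convex_on UNIV h"
proof (rule convex_onI)
  fix t :: real and x y :: 'a
  assume t: "0 < t" "t < 1"
  obtain c d where c: "(x, c) \<in> E" "c \<le> h x" and d: "(y, d) \<in> E" "d \<le> h y"
    using attained by meson
  have "((1 - t) *\<^sub>R x + t *\<^sub>R y, (1 - t) * c + t * d) \<in> E"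
    using convexD[OF \<open>convex E\<close> c(1) d(1), of "1 - t" t] t by simp
  then have "h ((1 - t) *\<^sub>R x + t *\<^sub>R y) \<le> max (l ((1 - t) *\<^sub>R x + t *\<^sub>R y)) ((1 - t) * c + t * d)"
    by (rule bounded)
  also have "\<dots> \<le> (1 - t) * h x + t * h y"
  proof (rule max.boundedI)
    have "l ((1 - t) *\<^sub>R x + t *\<^sub>R y) \<le> (1 - t) * l x + t * l y"
      using convex_onD[OF \<open>convex_on UNIV l\<close>, of t x y] t by simp
    also have "\<dots> \<le> (1 - t) * h x + t * h y"
      using below[of x] below[of y] t by (intro add_mono mult_left_mono) auto
    finally show "l ((1 - t) *\<^sub>R x + t *\<^sub>R y) \<le> (1 - t) * h x + t * h y" .
    show "(1 - t) * c + t * d \<le> (1 - t) * h x + t * h y"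
      using c d t by (intro add_mono mult_left_mono) auto
  qed
  finally show "h ((1 - t) *\<^sub>R x + t *\<^sub>R y) \<le> (1 - t) * h x + t * h y" .
qed simp

lemma has_real_derivative_if_continuous_derivative:
  fixes f f' :: "real \<Rightarrow> real"
  assumes "isCont f x" "isCont f' x"
    and "\<forall>\<^sub>F y in at x. (f has_real_derivative f' y) (at y)"
  shows "(f has_real_derivative f' x) (at x)"
proof -
  have "((\<lambda>y. (f y - f x) / (y - x)) \<longlongrightarrow> f' x) (at x)"
  proof (rule lhopital)
    show "((\<lambda>y. f y - f x) \<longlongrightarrow> 0) (at x)"
      using assms(1) by (simp add: isCont_def LIM_zero)
    show "((\<lambda>y. y - x) \<longlongrightarrow> 0) (at x)"
      by (intro LIM_zero tendsto_ident_at)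
    show "\<forall>\<^sub>F y in at x. y - x \<noteq> 0"
      by (simp add: eventually_at_filter)
    show "\<forall>\<^sub>F y in at x. ((\<lambda>y. f y - f x) has_real_derivative f' y) (at y)"
      using assms(3) by eventually_elim (auto intro!: derivative_eq_intros)
    show "\<forall>\<^sub>F y in at x. ((\<lambda>y. y - x) has_real_derivative 1) (at y)"
      by (intro always_eventually allI) (auto intro!: derivative_eq_intros)
    show "((\<lambda>y. f' y / 1) \<longlongrightarrow> f' x) (at x)"
      using assms(2) by (simp add: isCont_def)
  qed simp
  then show ?thesis
    by (simp add: has_field_derivative_iff)
qed

section \<open>Convexity of the shift\<close>

text \<open>
  For the paper's class of \<open>f\<close> these hypotheses hold because \<open>f'\<close> is nondecreasing with
  values in \<open>[-1, 1]\<close> and strictly increasing on \<open>[-a, a]\<close>.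
\<close>
locale shift_setting =
  fixes f :: "real \<Rightarrow> real" and a \<alpha> :: real
  assumes alpha_less_1: "\<alpha> < 1"
    and convex_F: "convex_on UNIV (F_al f \<alpha>)"
    and F_antimono_left: "\<And>y y'. y \<le> y' \<Longrightarrow> y' \<le> xplus f a \<alpha> \<Longrightarrow> F_al f \<alpha> y' \<le> F_al f \<alpha> y"
    and F_strict_mono_right: "\<And>z z'. xplus f a \<alpha> \<le> z \<Longrightarrow> z < z' \<Longrightarrow> F_al f \<alpha> z < F_al f \<alpha> z'"
    and F_increment_le: "\<And>z z'. z \<le> z' \<Longrightarrow> F_al f \<alpha> z' - F_al f \<alpha> z \<le> (1 - \<alpha>) * (z' - z)"
    and F_unbounded: "\<And>c. \<exists>z \<ge> xplus f a \<alpha>. c \<le> F_al f \<alpha> z"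
begin

abbreviation F where "F \<equiv> F_al f \<alpha>"
abbreviation x0 where "x0 \<equiv> xplus f a \<alpha>"
abbreviation phi where "phi \<equiv> phi_al f a \<alpha>"
abbreviation tau where "tau \<equiv> tau_al f a \<alpha>"
abbreviation s where "s \<equiv> s_al f a \<alpha>"

lemma continuous_on_F: "continuous_on S F"
  using convex_on_continuous[OF open_UNIV convex_F] continuous_on_subset by blast

lemma F_mono_right: "x0 \<le> z \<Longrightarrow> z \<le> z' \<Longrightarrow> F z \<le> F z'"
  using F_strict_mono_right by (cases "z = z'") (auto intro: less_imp_le)

lemma F_inj_right: "x0 \<le> z \<Longrightarrow> x0 \<le> z' \<Longrightarrow> F z = F z' \<Longrightarrow> z = z'"
  using F_strict_mono_right by (cases z z' rule: linorder_cases) fastforce+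

lemma F_inv_F: "x0 \<le> z \<Longrightarrow> F_inv f a \<alpha> (F z) = z"
  unfolding F_inv_def by (rule the_equality) (auto intro: F_inj_right)

lemma F_F_inv:
  assumes "F x0 \<le> c"
  shows "x0 \<le> F_inv f a \<alpha> c \<and> F (F_inv f a \<alpha> c) = c"
proof -
  obtain Z where "x0 \<le> Z" "c \<le> F Z"
    using F_unbounded by blast
  then obtain z where "x0 \<le> z" "F z = c"
    using IVT'[of F x0 c Z] assms continuous_on_F by auto
  then show ?thesis
    using F_inv_F by auto
qed

lemma phi_left:
  assumes "y \<le> x0"
  shows "x0 \<le> phi y \<and> F (phi y) = F y"
  using F_F_inv[of "F y"] F_antimono_left[OF assms] by (simp add: phi_al_def)

lemma s_eq: "s = F x0 / (1 - \<alpha>)"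
  by (simp add: s_al_def delta_al_def phi_al_def F_inv_F)

lemma shift_strict_mono:
  assumes "y < y'" "y' \<le> x0"
  shows "y + delta_al f a \<alpha> y < y' + delta_al f a \<alpha> y'"
proof -
  have y: "x0 \<le> phi y" "F (phi y) = F y" and y': "x0 \<le> phi y'" "F (phi y') = F y'"
    using phi_left assms by auto
  have "phi y' \<le> phi y"
    using F_antimono_left[of y y'] F_strict_mono_right[of "phi y" "phi y'"] assms y y' by force
  then have "F y - F y' \<le> (1 - \<alpha>) * (phi y - phi y')"
    using F_increment_le y y' by metis
  then have "(F y - F y') / (1 - \<alpha>) \<le> phi y - phi y'"
    using alpha_less_1 by (simp add: pos_divide_le_eq mult.commute)
  then have "F y / (1 - \<alpha>) - phi y \<le> F y' / (1 - \<alpha>) - phi y'"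
    by (simp add: diff_divide_distrib)
  then show ?thesis
    using assms by (simp add: delta_al_def)
qed

lemma shift_le:
  assumes "y \<le> x0"
  shows "y + delta_al f a \<alpha> y \<le> y + s - x0"
proof -
  have "F y - F x0 \<le> (1 - \<alpha>) * (phi y - x0)"
    using F_increment_le phi_left[OF assms] by metis
  then have "(F y - F x0) / (1 - \<alpha>) \<le> phi y - x0"
    using alpha_less_1 by (simp add: pos_divide_le_eq mult.commute)
  then show ?thesis
    by (simp add: delta_al_def s_eq diff_divide_distrib)
qed

lemma continuous_on_shift: "continuous_on {Y..x0} (\<lambda>y. y + delta_al f a \<alpha> y)"
proof (cases "Y \<le> x0")
  case True
  obtain M where M: "x0 \<le> M" "F Y \<le> F M"
    using F_unbounded by blast
  have "continuous_on (F ` {x0..M}) (F_inv f a \<alpha>)"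
    by (rule continuous_on_inv) (auto intro: continuous_on_F F_inv_F)
  moreover have "F ` {Y..x0} \<subseteq> F ` {x0..M}"
  proof
    fix c assume "c \<in> F ` {Y..x0}"
    then obtain y where y: "Y \<le> y" "y \<le> x0" "c = F y"
      by auto
    have "F x0 \<le> F y" "F y \<le> F M"
      using F_antimono_left y M by force+
    then obtain z where "x0 \<le> z" "z \<le> M" "F z = F y"
      using IVT'[of F x0 "F y" M] M continuous_on_F by blast
    then show "c \<in> F ` {x0..M}"
      using y by (metis atLeastAtMost_iff image_eqI)
  qed
  ultimately have "continuous_on {Y..x0} phi"
    unfolding phi_al_def[abs_def] by (rule continuous_on_compose2[OF _ continuous_on_F])
  then show ?thesis
    unfolding delta_al_def using alpha_less_1 by (intro continuous_intros continuous_on_F) auto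
qed simp

lemma tau_left:
  assumes "X \<le> s"
  shows "tau X \<le> x0 \<and> F (tau X) = (1 - \<alpha>) * (X - tau X + phi (tau X))"
proof -
  define Y where "Y = min x0 (X - s + x0)"
  have "Y \<le> x0" "Y + delta_al f a \<alpha> Y \<le> X"
    using shift_le[of Y] by (auto simp: Y_def)
  moreover have "x0 + delta_al f a \<alpha> x0 = s"
    by (simp add: s_al_def)
  ultimately obtain y where y: "y \<le> x0" "y + delta_al f a \<alpha> y = X"
    using IVT'[of "\<lambda>y. y + delta_al f a \<alpha> y" Y X x0] assms continuous_on_shift by auto
  have "tau X = y"
    unfolding tau_al_def
  proof (rule the_equality)
    show "y' = y" if "y' \<le> x0 \<and> y' + delta_al f a \<alpha> y' = X" for y'
      using that y shift_strict_mono by (cases y y' rule: linorder_cases) fastforce+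
  qed (use y in simp)
  then show ?thesis
    using y alpha_less_1 by (simp add: delta_al_def field_simps)
qed

definition shift_region :: "(real \<times> real) set" where
  "shift_region = {(X, c). \<exists>y z. F y \<le> c \<and> F z \<le> c \<and> c \<le> (1 - \<alpha>) * (X - y + z)}"

lemma shift_regionI:
  "F y \<le> c \<Longrightarrow> F z \<le> c \<Longrightarrow> c \<le> (1 - \<alpha>) * (X - y + z) \<Longrightarrow> (X, c) \<in> shift_region"
  unfolding shift_region_def by blast

lemma convex_shift_region: "convex shift_region"
proof (rule convexI)
  fix p q :: "real \<times> real" and u v :: real
  assume "p \<in> shift_region" "q \<in> shift_region" and uv: "0 \<le> u" "0 \<le> v" "u + v = 1"
  then obtain X c y z X' c' y' z' where p: "p = (X, c)" "F y \<le> c" "F z \<le> c" "c \<le> (1 - \<alpha>) * (X - y + z)"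
    and q: "q = (X', c')" "F y' \<le> c'" "F z' \<le> c'" "c' \<le> (1 - \<alpha>) * (X' - y' + z')"
    unfolding shift_region_def by auto
  have F_comb: "F (u * w + v * w') \<le> u * c + v * c'" if "F w \<le> c" "F w' \<le> c'" for w w'
  proof -
    have "F (u * w + v * w') \<le> u * F w + v * F w'"
      using convex_onD[OF convex_F, of v w w'] uv by (simp add: eq_diff_eq[symmetric])
    also have "\<dots> \<le> u * c + v * c'"
      using that uv by (intro add_mono mult_left_mono) auto
    finally show ?thesis .
  qed
  have "u * c + v * c' \<le> (1 - \<alpha>) * (u * X + v * X' - (u * y + v * y') + (u * z + v * z'))"
    using add_mono[OF mult_left_mono[OF p(4) uv(1)] mult_left_mono[OF q(4) uv(2)]]
    by (simp add: algebra_simps)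
  then show "u *\<^sub>R p + v *\<^sub>R q \<in> shift_region"
    using p q F_comb by (auto intro: shift_regionI)
qed

lemma Sh_minus_linear_ge: "(1 - \<alpha>) * X \<le> Sh f a \<alpha> X - \<alpha> * X"
proof (cases "X \<le> s")
  case True
  have "x0 \<le> phi (tau X)"
    using phi_left tau_left[OF True] by blast
  then have "(1 - \<alpha>) * X \<le> (1 - \<alpha>) * (X - tau X + phi (tau X))"
    using tau_left[OF True] alpha_less_1 by (intro mult_left_mono) auto
  then show ?thesis
    using True tau_left[OF True] by (simp add: Sh_def)
qed (simp add: Sh_def algebra_simps)

lemma shift_region_attains_Sh: "\<exists>c. (X, c) \<in> shift_region \<and> c \<le> Sh f a \<alpha> X - \<alpha> * X"
proof (cases "X \<le> s")
  case True
  then have "(X, F (tau X)) \<in> shift_region"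
    using tau_left phi_left by (metis shift_regionI order_refl)
  then show ?thesis
    using True by (auto simp: Sh_def)
next
  case False
  then have "F x0 \<le> (1 - \<alpha>) * X"
    using alpha_less_1 by (simp add: s_eq field_simps)
  then have "(X, F x0) \<in> shift_region"
    by (intro shift_regionI[of x0 _ x0]) auto
  then show ?thesis
    using False \<open>F x0 \<le> (1 - \<alpha>) * X\<close> by (auto simp: Sh_def algebra_simps)
qed

lemma Sh_minus_linear_le:
  assumes "(X, c) \<in> shift_region"
  shows "Sh f a \<alpha> X - \<alpha> * X \<le> max ((1 - \<alpha>) * X) c"
proof (cases "X \<le> s")
  case True
  obtain y z where yz: "F y \<le> c" "F z \<le> c" "c \<le> (1 - \<alpha>) * (X - y + z)"
    using assms unfolding shift_region_def by auto
  define y0 where "y0 = tau X"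
  define z0 where "z0 = phi y0"
  have y0: "y0 \<le> x0" "F y0 = (1 - \<alpha>) * (X - y0 + z0)"
    using tau_left[OF True] by (simp_all add: y0_def z0_def)
  have z0: "x0 \<le> z0" "F z0 = F y0"
    using phi_left[OF y0(1)] by (simp_all add: z0_def)
  have "F y0 \<le> c"
  proof (rule ccontr)
    assume "\<not> F y0 \<le> c"
    then have "y0 < y" "z < z0"
      using yz F_antimono_left[of y y0] F_mono_right[of z0 z] y0 z0 by force+
    then have "F z0 - F z \<le> (1 - \<alpha>) * (z0 - z)"
      using F_increment_le by simp
    then have "F y0 \<le> (1 - \<alpha>) * (X - y + z0)"
      using yz z0 by (simp add: algebra_simps)
    also have "\<dots> < (1 - \<alpha>) * (X - y0 + z0)"
      using \<open>y0 < y\<close> alpha_less_1 by (intro mult_strict_left_mono) auto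
    also have "\<dots> = F y0"
      using y0 by simp
    finally show False
      by simp
  qed
  then show ?thesis
    using True by (simp add: Sh_def y0_def)
qed (simp add: Sh_def algebra_simps)

theorem convex_on_Sh: "convex_on UNIV (Sh f a \<alpha>)"
proof -
  have linear_convex: "convex_on UNIV (\<lambda>X. b * X)" for b :: real
    by (rule convex_onI) (auto simp: algebra_simps)
  have "convex_on UNIV (\<lambda>X. Sh f a \<alpha> X - \<alpha> * X)"
    by (rule convex_on_max_lower_boundary[OF convex_shift_region linear_convex Sh_minus_linear_ge
          shift_region_attains_Sh Sh_minus_linear_le])
  then have "convex_on UNIV (\<lambda>X. (Sh f a \<alpha> X - \<alpha> * X) + \<alpha> * X)"
    using linear_convex by (rule convex_on_add)
  then show ?thesis
    by simp
qed

end

section \<open>The function \<open>\<Omega>\<close>\<close>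

definition Omega' :: "real \<Rightarrow> real" where
  "Omega' s = 2 / pi * arcsin (max (-1) (min 1 (s / 2)))"

lemma Omega'_inside: "\<bar>s\<bar> \<le> 2 \<Longrightarrow> Omega' s = 2 / pi * arcsin (s / 2)"
  by (simp add: Omega'_def)

lemma Omega'_ge_2: "2 \<le> s \<Longrightarrow> Omega' s = 1"
  by (simp add: Omega'_def)

lemma Omega'_le_minus_2: "s \<le> -2 \<Longrightarrow> Omega' s = -1"
  by (simp add: Omega'_def arcsin_minus)

lemma continuous_on_Omega': "continuous_on UNIV Omega'"
  unfolding Omega'_def by (intro continuous_intros) auto

lemma mono_Omega': "mono Omega'"
  unfolding Omega'_def by (intro monoI mult_left_mono arcsin_le_arcsin) auto

lemma Omega'_le_1: "Omega' s \<le> 1"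
  using monoD[OF mono_Omega', of s "max s 2"] by (simp add: Omega'_ge_2)

lemma Omega'_strict_mono:
  assumes "x < y" "x < 2" "-2 < y"
  shows "Omega' x < Omega' y"
  unfolding Omega'_def using assms
  by (intro mult_strict_left_mono arcsin_less_arcsin) auto

lemma Omega_inside: "\<bar>s\<bar> \<le> 2 \<Longrightarrow> Omega s = 2 / pi * (s * arcsin (s / 2) + sqrt (4 - s\<^sup>2))"
  by (simp add: Omega_def)

lemma Omega_outside: "2 \<le> \<bar>s\<bar> \<Longrightarrow> Omega s = \<bar>s\<bar>"
proof (cases "\<bar>s\<bar> = 2")
  case True
  then have "s = 2 \<or> s = -2"
    by linarith
  then show ?thesis
    by (auto simp: Omega_def arcsin_minus)
qed (simp add: Omega_def)

lemma continuous_on_Omega: "continuous_on UNIV Omega"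
proof -
  have "continuous_on UNIV (\<lambda>s. if \<bar>s\<bar> \<le> 2 then 2 / pi * (s * arcsin (s / 2) + sqrt (4 - s\<^sup>2)) else \<bar>s\<bar>)"
  proof (rule continuous_on_cases_le)
    show "2 / pi * (s * arcsin (s / 2) + sqrt (4 - s\<^sup>2)) = \<bar>s\<bar>" if "\<bar>s\<bar> = 2" for s
      using Omega_inside[of s] Omega_outside[of s] that by (metis order_refl)
  qed (auto intro!: continuous_intros)
  then show ?thesis
    by (simp add: Omega_def[abs_def])
qed

lemma Omega_has_derivative_inside:
  assumes "-2 < s" "s < 2"
  shows "(Omega has_real_derivative Omega' s) (at s)"
proof -
  have "0 < (2 - s) * (2 + s)"
    using assms by simp
  then have pos: "0 < 4 - s\<^sup>2"
    by (simp add: power2_eq_square algebra_simps)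
  have root: "sqrt ((4 - s\<^sup>2) / 4) = sqrt (4 - s\<^sup>2) / 2"
    by (simp add: real_sqrt_divide)
  have "((\<lambda>s. 2 / pi * (s * arcsin (s / 2) + sqrt (4 - s\<^sup>2))) has_real_derivative Omega' s) (at s)"
    using assms pos by (auto intro!: derivative_eq_intros simp: Omega'_inside root divide_simps)
  then show ?thesis
    by (rule has_field_derivative_transform_within_open[where S = "{-2<..<2}"])
       (use assms in \<open>auto simp: Omega_inside\<close>)
qed

lemma Omega_has_derivative_if_abs_neq_2:
  assumes "\<bar>s\<bar> \<noteq> 2"
  shows "(Omega has_real_derivative Omega' s) (at s)"
proof -
  consider "s < -2" | "-2 < s" "s < 2" | "2 < s"
    using assms by linarith
  then show ?thesis
  proof cases
    case 1
    have "(uminus has_real_derivative -1) (at s)"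
      by (auto intro!: derivative_eq_intros)
    then have "(Omega has_real_derivative -1) (at s)"
      by (rule has_field_derivative_transform_within_open[where S = "{..< -2}"])
         (use 1 in \<open>auto simp: Omega_outside\<close>)
    then show ?thesis
      using 1 by (simp add: Omega'_le_minus_2)
  next
    case 2
    then show ?thesis
      by (rule Omega_has_derivative_inside)
  next
    case 3
    have "((\<lambda>s. s) has_real_derivative 1) (at s)"
      by (auto intro!: derivative_eq_intros)
    then have "(Omega has_real_derivative 1) (at s)"
      by (rule has_field_derivative_transform_within_open[where S = "{2 <..}"])
         (use 3 in \<open>auto simp: Omega_outside\<close>)
    then show ?thesis
      using 3 by (simp add: Omega'_ge_2)
  qed
qed

lemma Omega_has_derivative: "(Omega has_real_derivative Omega' s) (at s)"
proof (cases "\<bar>s\<bar> = 2")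
  case True
  have "\<forall>\<^sub>F y in at s. \<bar>y\<bar> \<noteq> 2"
    unfolding eventually_at
    by (rule exI[of _ 1]) (use True in \<open>auto simp: dist_real_def abs_if split: if_splits\<close>)
  then have "\<forall>\<^sub>F y in at s. (Omega has_real_derivative Omega' y) (at y)"
    by eventually_elim (rule Omega_has_derivative_if_abs_neq_2)
  with continuous_on_Omega continuous_on_Omega' show ?thesis
    by (intro has_real_derivative_if_continuous_derivative) (simp_all add: continuous_on_eq_continuous_at)
next
  case False
  then show ?thesis
    by (rule Omega_has_derivative_if_abs_neq_2)
qed

lemma xplus_Omega:
  assumes "-1 \<le> \<alpha>" "\<alpha> \<le> 1"
  shows "\<bar>xplus Omega 2 \<alpha>\<bar> \<le> 2 \<and> Omega' (xplus Omega 2 \<alpha>) = \<alpha>"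
proof -
  have deriv_Omega: "deriv Omega = Omega'"
    using DERIV_imp_deriv[OF Omega_has_derivative] by blast
  obtain x where x: "-2 \<le> x" "x \<le> 2" "Omega' x = \<alpha>"
    using IVT'[of Omega' "-2" \<alpha> 2] assms continuous_on_subset[OF continuous_on_Omega']
    by (auto simp: Omega'_le_minus_2 Omega'_ge_2)
  have "\<exists>!x. x \<in> {-2..2} \<and> deriv Omega x = \<alpha>"
  proof (rule ex1I)
    show "x \<in> {-2..2} \<and> deriv Omega x = \<alpha>"
      using x by (simp add: deriv_Omega)
    show "y = x" if "y \<in> {-2..2} \<and> deriv Omega y = \<alpha>" for y
      using that x Omega'_strict_mono[of x y] Omega'_strict_mono[of y x]
      by (cases x y rule: linorder_cases) (auto simp: deriv_Omega)
  qed
  from theI'[OF this] show ?thesis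
    by (simp add: xplus_def deriv_Omega abs_le_iff)
qed

lemma F_al_Omega_has_derivative: "(F_al Omega \<alpha> has_real_derivative Omega' s - \<alpha>) (at s)"
  unfolding F_al_def[abs_def] by (auto intro!: derivative_eq_intros Omega_has_derivative)

lemma convex_on_F_al_Omega: "convex_on UNIV (F_al Omega \<alpha>)"
  by (rule convex_on_realI[where f' = "\<lambda>s. Omega' s - \<alpha>"])
     (auto intro: F_al_Omega_has_derivative monoD[OF mono_Omega'])

lemma F_al_Omega_antimono:
  assumes "y \<le> y'" "Omega' y' \<le> \<alpha>"
  shows "F_al Omega \<alpha> y' \<le> F_al Omega \<alpha> y"
proof (rule DERIV_nonpos_imp_nonincreasing[OF assms(1)])
  fix x assume "y \<le> x" "x \<le> y'"
  then have "Omega' x \<le> \<alpha>"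
    using assms monoD[OF mono_Omega', of x y'] by simp
  then show "\<exists>D. (F_al Omega \<alpha> has_real_derivative D) (at x) \<and> D \<le> 0"
    using F_al_Omega_has_derivative[of \<alpha> x] by auto
qed

lemma F_al_Omega_strict_mono:
  assumes "z < z'" "\<And>x. z < x \<Longrightarrow> \<alpha> < Omega' x"
  shows "F_al Omega \<alpha> z < F_al Omega \<alpha> z'"
proof (rule DERIV_pos_imp_increasing_open[OF assms(1)])
  fix x assume "z < x"
  then show "\<exists>D. (F_al Omega \<alpha> has_real_derivative D) (at x) \<and> 0 < D"
    using assms F_al_Omega_has_derivative[of \<alpha> x] by auto
qed (intro continuous_at_imp_continuous_on ballI DERIV_isCont[OF F_al_Omega_has_derivative])

lemma F_al_Omega_increment_le:
  assumes "z \<le> z'"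
  shows "F_al Omega \<alpha> z' - F_al Omega \<alpha> z \<le> (1 - \<alpha>) * (z' - z)"
proof -
  have "(1 - \<alpha>) * z - F_al Omega \<alpha> z \<le> (1 - \<alpha>) * z' - F_al Omega \<alpha> z'"
  proof (rule DERIV_nonneg_imp_nondecreasing[OF assms])
    fix x
    have "((\<lambda>z. (1 - \<alpha>) * z - F_al Omega \<alpha> z) has_real_derivative 1 - Omega' x) (at x)"
      by (auto intro!: derivative_eq_intros F_al_Omega_has_derivative)
    then show "\<exists>D. ((\<lambda>z. (1 - \<alpha>) * z - F_al Omega \<alpha> z) has_real_derivative D) (at x) \<and> 0 \<le> D"
      using Omega'_le_1 by auto
  qed
  then show ?thesis
    by (simp add: algebra_simps)
qed

lemma F_al_Omega_unbounded:
  assumes "\<alpha> < 1"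
  shows "\<exists>z \<ge> 2. c \<le> F_al Omega \<alpha> z"
proof (intro exI conjI)
  let ?z = "max 2 (c / (1 - \<alpha>))"
  have "c = (1 - \<alpha>) * (c / (1 - \<alpha>))"
    using assms by simp
  also have "\<dots> \<le> (1 - \<alpha>) * ?z"
    using assms by (intro mult_left_mono) auto
  also have "\<dots> = F_al Omega \<alpha> ?z"
    by (simp add: F_al_def Omega_outside algebra_simps)
  finally show "c \<le> F_al Omega \<alpha> ?z" .
qed simp

lemma shift_setting_Omega:
  assumes "-1 \<le> \<alpha>" "\<alpha> < 1"
  shows "shift_setting Omega 2 \<alpha>"
proof -
  define x0 where "x0 = xplus Omega 2 \<alpha>"
  have x0: "\<bar>x0\<bar> \<le> 2" "Omega' x0 = \<alpha>"
    using xplus_Omega assms by (auto simp: x0_def)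
  have "x0 \<noteq> 2"
    using x0 assms Omega'_ge_2[of 2] by auto
  show ?thesis
  proof (unfold_locales, fold x0_def)
    show "F_al Omega \<alpha> y' \<le> F_al Omega \<alpha> y" if "y \<le> y'" "y' \<le> x0" for y y'
      using that x0 monoD[OF mono_Omega', of y' x0] by (intro F_al_Omega_antimono) auto
    show "F_al Omega \<alpha> z < F_al Omega \<alpha> z'" if "x0 \<le> z" "z < z'" for z z'
      using that x0 \<open>x0 \<noteq> 2\<close> Omega'_strict_mono[of x0] by (intro F_al_Omega_strict_mono) force+
    show "\<exists>z \<ge> x0. c \<le> F_al Omega \<alpha> z" for c
    proof -
      obtain z where "2 \<le> z" "c \<le> F_al Omega \<alpha> z"
        using F_al_Omega_unbounded[OF assms(2)] by blast
      then show ?thesis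
        using x0 by (intro exI[of _ z]) auto
    qed
  qed (use assms convex_on_F_al_Omega F_al_Omega_increment_le in auto)
qed

theorem convex_on_Sh_Omega:
  assumes "-1 \<le> \<alpha>" "\<alpha> < 1"
  shows "convex_on UNIV (Sh Omega 2 \<alpha>)"
  using shift_setting_Omega[OF assms] by (rule shift_setting.convex_on_Sh)

theorem corollary4p15:
  fixes e :: int
  assumes "e \<ge> 2"
  shows "convex_on UNIV (Sh Omega 2 (1 - 2 / real_of_int e))"
  using assms by (intro convex_on_Sh_Omega) (simp_all add: field_simps)

end
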